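(* Let $\Pi=\{321,312,123\}$ (consecutive patterns). For $n\ge 2$ let $I_n^{2}(q)=\sum q^{\mathrm{inv}(\pi)}$, the sum over those $\pi\in\mathrm{Av}_n(\Pi)$ with $\pi_{n-1}>\pi_n$ and either $n=2$ or $\pi_{n-2}<\pi_{n-1}$. Then $I_2^{2}(q)=q$, $I_3^{2}(q)=q+q^2$, $$I_n^{2}(q)=(q+q^2+\cdots+q^{n-1})\,I_{n-2}^{2}(q)\quad (n\ge 4),$$ and $I_n(\Pi;q)=I_{n-1}^{2}(q)+I_n^{2}(q)$ for $n\ge 3$. In particular, for $n\ge 4$, $$I_n(\Pi;q)=I_{n-1}^{2}(q)+(q+q^2+\cdots+q^{n-1})\,I_{n-2}^{2}(q).$$
   Context: For $\sigma\in S_3$ and $\pi=\pi_1\cdots\pi_n\in S_n$, $\pi$ contains the consecutive pattern $\sigma$ if there is an index $i$ with $1\le i\le n-2$ such that $\pi_i\pi_{i+1}\pi_{i+2}$ is order-isomorphic to $\sigma$; otherwise $\pi$ avoids $\sigma$. $\mathrm{Av}_n(\Pi)$ is the set of $\pi\in S_n$ avoiding every pattern in $\Pi$. $\mathrm{inv}(\pi)=\#\{(i,j):i<j,\ \pi_i>\pi_j\}$ and $I_n(\Pi;q)=\sum_{\pi\in\mathrm{Av}_n(\Pi)}q^{\mathrm{inv}(\pi)}$. Thus $I_n^{2}$ collects the avoiders whose final maximal decreasing run has length exactly $2$. *)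

theory Defs
  imports "HOL-Combinatorics.Multiset_Permutations" "HOL-Computational_Algebra.Polynomial"
begin

text \<open>Permutations of [n] are lists (one-line notation) in permutations_of_set {1..n};
  list index i (0-based) corresponds to position i+1.\<close>

definition order_iso :: "nat list \<Rightarrow> nat list \<Rightarrow> bool" where
  "order_iso u v \<longleftrightarrow> length u = length v \<and>
     (\<forall>j < length u. \<forall>k < length u. (u ! j < u ! k) = (v ! j < v ! k))"

definition contains_consec :: "nat list \<Rightarrow> nat list \<Rightarrow> bool" where
  "contains_consec p \<sigma> \<longleftrightarrow>
     (\<exists>i. i + 2 < length p \<and> order_iso [p ! i, p ! (i+1), p ! (i+2)] \<sigma>)"

definition Av :: "nat \<Rightarrow> nat list set \<Rightarrow> nat list set" where
  "Av n Pats = {p \<in> permutations_of_set {1..n}. \<forall>\<sigma>\<in>Pats. \<not> contains_consec p \<sigma>}"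

definition inv_count :: "nat list \<Rightarrow> nat" where
  "inv_count p = card {(i, j). i < j \<and> j < length p \<and> p ! i > p ! j}"

definition I_poly :: "nat \<Rightarrow> nat list set \<Rightarrow> int poly" where
  "I_poly n Pats = (\<Sum>p\<in>Av n Pats. monom 1 (inv_count p))"

definition Pi0 :: "nat list set" where
  "Pi0 = {[3,2,1], [3,1,2], [1,2,3]}"

definition I2 :: "nat \<Rightarrow> int poly" where
  "I2 n = (\<Sum>p\<in>{p \<in> Av n Pi0. p ! (n-2) > p ! (n-1) \<and>
                     (n = 2 \<or> p ! (n-3) < p ! (n-2))}. monom 1 (inv_count p))"

end

theory Submission
  imports Defs
begin

text \<open>Reverse everything: for \<open>q = rev p\<close> the forbidden consecutive patterns become 123, 213
  and 321, and \<open>inv p\<close> becomes the number of non-inversions (coinversions) of \<open>q\<close>. In such a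
  \<open>q\<close> the maximum \<open>n\<close> stands in position 1 or 2, because an entry exceeding two distinct
  predecessors completes a 123 or a 213. If \<open>q = n # r\<close>, then \<open>r\<close> is a reversed avoider of
  length \<open>n - 1\<close> starting with an ascent and \<open>n\<close> adds no coinversions; this gives
  \<open>I_n = I_{n-1}^2 + I_n^2\<close>. If \<open>q = j # n # s\<close>, then \<open>j\<close> is arbitrary, \<open>s\<close> is a
  relabelled reversed avoider of length \<open>n - 2\<close> starting with an ascent, and \<open>j\<close> adds
  \<open>n - j\<close> coinversions, which produces the factor \<open>\<Sum>k=1..n-1. monom 1 k\<close>.\<close>

definition free_triple :: "nat \<Rightarrow> nat \<Rightarrow> nat \<Rightarrow> bool" where
  "free_triple x y z \<longleftrightarrow> \<not> (x < y \<and> y < z) \<and> \<not> (z < y \<and> y < x) \<and> \<not> (y < x \<and> x < z)"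

fun free_word :: "nat list \<Rightarrow> bool" where
  "free_word (x # y # z # xs) \<longleftrightarrow> free_triple x y z \<and> free_word (y # z # xs)"
| "free_word _ \<longleftrightarrow> True"

lemma free_word_iff_nth:
  "free_word q \<longleftrightarrow> (\<forall>i. i + 2 < length q \<longrightarrow> free_triple (q!i) (q!(i+1)) (q!(i+2)))"
proof (induction q rule: free_word.induct)
  case (1 x y z xs)
  have split: "(\<forall>i. P i) \<longleftrightarrow> P 0 \<and> (\<forall>i. P (Suc i))" for P :: "nat \<Rightarrow> bool"
    by (metis not0_implies_Suc)
  show ?case by (subst split) (simp add: 1)
qed auto

lemma all_below_reflect:
  "(\<forall>i. i + 2 < (n::nat) \<longrightarrow> Q i) \<longleftrightarrow> (\<forall>i. i + 2 < n \<longrightarrow> Q (n - 3 - i))"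
proof (intro iffI allI impI)
  fix i assume "\<forall>i. i + 2 < n \<longrightarrow> Q (n - 3 - i)" "i + 2 < n"
  moreover have "n - 3 - (n - 3 - i) = i" "n - 3 - i + 2 < n" using \<open>i + 2 < n\<close> by auto
  ultimately show "Q i" by metis
qed auto

lemma all_triples_rev:
  "(\<forall>i. i + 2 < length p \<longrightarrow> P (p!i) (p!(i+1)) (p!(i+2))) \<longleftrightarrow>
   (\<forall>i. i + 2 < length p \<longrightarrow> P (rev p!(i+2)) (rev p!(i+1)) (rev p!i))"
proof -
  have "rev p!(i+2) = p!(length p - 3 - i) \<and> rev p!(i+1) = p!(length p - 3 - i + 1)
      \<and> rev p!i = p!(length p - 3 - i + 2)" if "i + 2 < length p" for i
    using that by (simp add: rev_nth Suc_diff_Suc numeral_3_eq_3)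
  then show ?thesis
    by (subst all_below_reflect) auto
qed

lemma order_iso_Pi0:
  "order_iso [a,b,c] [3,2,1] \<longleftrightarrow> c < b \<and> b < a"
  "order_iso [a,b,c] [3,1,2] \<longleftrightarrow> b < c \<and> c < a"
  "order_iso [a,b,c] [1,2,3] \<longleftrightarrow> a < b \<and> b < c"
  unfolding order_iso_def by (auto simp: less_Suc_eq numeral_3_eq_3 All_less_Suc)

lemma avoids_Pi0_iff_free_word_rev:
  "(\<forall>\<sigma>\<in>Pi0. \<not> contains_consec p \<sigma>) \<longleftrightarrow> free_word (rev p)"
proof -
  have "(\<forall>\<sigma>\<in>Pi0. \<not> contains_consec p \<sigma>) \<longleftrightarrow>
      (\<forall>i. i + 2 < length p \<longrightarrow> free_triple (p!(i+2)) (p!(i+1)) (p!i))"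
    unfolding Pi0_def contains_consec_def free_triple_def
    by (simp only: insert_iff empty_iff ball_simps bex_simps order_iso_Pi0) blast
  also have "\<dots> \<longleftrightarrow> free_word (rev p)"
    by (subst all_triples_rev) (simp add: free_word_iff_nth)
  finally show ?thesis .
qed

fun coinv :: "nat list \<Rightarrow> nat" where
  "coinv [] = 0"
| "coinv (x # xs) = length (filter (\<lambda>y. x < y) xs) + coinv xs"

lemma inv_count_snoc: "inv_count (xs @ [x]) = inv_count xs + length (filter (\<lambda>y. x < y) xs)"
proof -
  let ?n = "length xs"
  let ?old = "{(i, j). i < j \<and> j < ?n \<and> xs ! i > xs ! j}"
  let ?new = "(\<lambda>i. (i, ?n)) ` {i. i < ?n \<and> x < xs ! i}"
  have split: "{(i, j). i < j \<and> j < length (xs @ [x]) \<and> (xs @ [x]) ! i > (xs @ [x]) ! j} = ?old \<union> ?new"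
    by (auto simp: nth_append less_Suc_eq)
  have "finite ?old" by (rule finite_subset[of _ "{..<?n} \<times> {..<?n}"]) auto
  moreover have "card ?new = length (filter (\<lambda>y. x < y) xs)"
    by (subst card_image) (auto simp: inj_on_def length_filter_conv_card)
  ultimately show ?thesis
    unfolding inv_count_def split by (subst card_Un_disjoint) auto
qed

lemma inv_count_eq_coinv_rev: "inv_count p = coinv (rev p)"
proof (induction p rule: rev_induct)
  case (snoc x xs)
  then show ?case by (simp add: inv_count_snoc rev_filter[symmetric])
qed (simp add: inv_count_def)

lemma coinv_Cons_perm:
  "x # xs \<in> permutations_of_set A \<Longrightarrow> coinv (x # xs) = card {y \<in> A. x < y} + coinv xs"
  by (auto simp: permutations_of_set_def distinct_length_filter Int_def intro!: arg_cong[where f = card])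

lemma coinv_map_strict_mono: "strict_mono f \<Longrightarrow> coinv (map f xs) = coinv xs"
  by (induction xs) (simp_all add: filter_map comp_def strict_mono_less)

lemma free_word_map_strict_mono: "strict_mono f \<Longrightarrow> free_word (map f xs) = free_word xs"
  by (induction xs rule: free_word.induct) (simp_all add: free_triple_def strict_mono_less)

lemma free_triple_max: "free_triple x y z \<Longrightarrow> x \<noteq> y \<Longrightarrow> z \<le> max x y"
  by (auto simp: free_triple_def)

lemma free_triple_asc: "free_triple x y z \<Longrightarrow> x < y \<Longrightarrow> y \<noteq> z \<Longrightarrow> z < y"
  by (auto simp: free_triple_def)

lemma free_word_Cons_top:
  assumes "\<forall>y\<in>set s. y < m" "distinct s" "2 \<le> length s"
  shows "free_word (m # s) \<longleftrightarrow> free_word s \<and> s!0 < s!1"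
proof -
  obtain y z t where "s = y # z # t" using \<open>2 \<le> length s\<close> by (cases s; cases "tl s") auto
  then show ?thesis using assms by (auto simp: free_triple_def)
qed

lemma free_word_Cons_below_top:
  "x < m \<Longrightarrow> \<forall>y\<in>set s. y < m \<Longrightarrow> free_word (x # m # s) \<longleftrightarrow> free_word (m # s)"
  by (cases s) (auto simp: free_triple_def)

lemma Cons_in_permutations_of_set:
  "x # xs \<in> permutations_of_set A \<longleftrightarrow> x \<in> A \<and> xs \<in> permutations_of_set (A - {x})"
  by (auto simp: permutations_of_set_def)

lemma map_in_permutations_of_set_image:
  "inj f \<Longrightarrow> map f xs \<in> permutations_of_set (f ` A) \<longleftrightarrow> xs \<in> permutations_of_set A"
  by (auto simp: permutations_of_set_def inj_image_eq_iff distinct_map intro: inj_on_subset)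

definition skip :: "nat \<Rightarrow> nat \<Rightarrow> nat" where
  "skip j x = (if x < j then x else Suc x)"

lemma strict_mono_skip: "strict_mono (skip j)"
  by (auto simp: strict_mono_def skip_def)

lemma range_skip: "range (skip j) = - {j}"
proof (intro equalityI subsetI)
  fix y assume "y \<in> - {j}"
  then have "y = skip j (if y < j then y else y - 1)" by (auto simp: skip_def)
  then show "y \<in> range (skip j)" by (rule range_eqI)
qed (auto simp: skip_def)

lemma skip_image_atLeastAtMost: "j \<in> {1..n-1} \<Longrightarrow> skip j ` {1..n-2} = {1..n-1} - {j}"
proof (intro equalityI subsetI)
  fix y assume "y \<in> {1..n-1} - {j}" "j \<in> {1..n-1}"
  then show "y \<in> skip j ` {1..n-2}"
    by (intro image_eqI[where x = "if y < j then y else y - 1"]) (auto simp: skip_def)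
qed (auto simp: skip_def)

text \<open>Reverses of the avoiders; \<open>rev_Av2 n\<close> corresponds to \<open>I2 n\<close>, the final descent of \<open>p\<close>
  being the initial ascent of \<open>q\<close>.\<close>

definition rev_Av :: "nat \<Rightarrow> nat list set" where
  "rev_Av n = {q \<in> permutations_of_set {1..n}. free_word q}"

definition rev_Av2 :: "nat \<Rightarrow> nat list set" where
  "rev_Av2 n = {q \<in> rev_Av n. q!0 < q!1}"

definition coinv_gf :: "nat list set \<Rightarrow> int poly" where
  "coinv_gf S = (\<Sum>q\<in>S. monom 1 (coinv q))"

lemma Av_Pi0_eq_rev_image: "{p \<in> Av n Pi0. P p} = rev ` {q \<in> rev_Av n. P (rev q)}"
proof -
  have Av_iff: "p \<in> Av n Pi0 \<longleftrightarrow> rev p \<in> rev_Av n" for p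
    by (simp add: Av_def rev_Av_def avoids_Pi0_iff_free_word_rev permutations_of_set_def)
  show ?thesis
  proof (intro set_eqI iffI)
    fix p assume "p \<in> {p \<in> Av n Pi0. P p}"
    then show "p \<in> rev ` {q \<in> rev_Av n. P (rev q)}"
      by (intro image_eqI[where x = "rev p"]) (simp_all add: Av_iff)
  qed (auto simp: Av_iff)
qed

lemma I_poly_Pi0_eq: "I_poly n Pi0 = coinv_gf (rev_Av n)"
  using Av_Pi0_eq_rev_image[of n "\<lambda>_. True"]
  by (simp add: I_poly_def coinv_gf_def sum.reindex inv_count_eq_coinv_rev)

lemma rev_Av_length: "q \<in> rev_Av n \<Longrightarrow> length q = n"
  by (auto simp: rev_Av_def dest: length_finite_permutations_of_set)

lemma rev_Av_max_position:
  assumes q: "q \<in> rev_Av n" and "1 \<le> n"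
  shows "q!0 = n \<or> q!1 = n"
proof (rule ccontr)
  assume not_front: "\<not> (q!0 = n \<or> q!1 = n)"
  have set: "set q = {1..n}" and dist: "distinct q" and free: "free_word q" and len: "length q = n"
    using q rev_Av_length[OF q] by (auto simp: rev_Av_def permutations_of_set_def)
  obtain k where k: "k < n" "q!k = n"
    using set len \<open>1 \<le> n\<close> by (metis atLeastAtMost_iff in_set_conv_nth order_refl)
  with not_front have "2 \<le> k" by (metis less_2_cases not_less One_nat_def)
  then obtain i where i: "k = i + 2" by (metis le_add_diff_inverse2)
  have "free_triple (q!i) (q!(i+1)) n" using free k i len by (auto simp: free_word_iff_nth)
  moreover have "q!i \<noteq> q!(i+1)" "q!i \<noteq> q!k" "q!(i+1) \<noteq> q!k"
    using dist len k(1) i by (simp_all add: nth_eq_iff_index_eq)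
  moreover have "q!i \<le> n" "q!(i+1) \<le> n" using set len k i nth_mem[of i q] nth_mem[of "i+1" q] by auto
  ultimately show False using free_triple_max[of "q!i" "q!(i+1)" n] k(2) by auto
qed

lemma Cons_top_in_rev_Av:
  assumes "3 \<le> n"
  shows "n # r \<in> rev_Av n \<longleftrightarrow> r \<in> rev_Av2 (n-1)"
proof -
  have "{1..n} - {n} = {1..n-1}" by auto
  then have perm: "n # r \<in> permutations_of_set {1..n} \<longleftrightarrow> r \<in> permutations_of_set {1..n-1}"
    using assms by (simp add: Cons_in_permutations_of_set)
  have "free_word (n # r) \<longleftrightarrow> free_word r \<and> r!0 < r!1" if "r \<in> permutations_of_set {1..n-1}"
    using that assms length_finite_permutations_of_set[OF that]
    by (intro free_word_Cons_top) (auto simp: permutations_of_set_def)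
  with perm show ?thesis unfolding rev_Av2_def rev_Av_def by auto
qed

lemma Cons_Cons_skip_in_rev_Av2:
  assumes "4 \<le> n"
  shows "j # n # map (skip j) r \<in> rev_Av2 n \<longleftrightarrow> j \<in> {1..n-1} \<and> r \<in> rev_Av2 (n-2)"
proof -
  let ?s = "map (skip j) r"
  have "j # n # ?s \<in> permutations_of_set {1..n} \<longleftrightarrow>
      (j \<in> {1..n} \<and> n \<in> {1..n} - {j}) \<and> ?s \<in> permutations_of_set ({1..n} - {j} - {n})"
    by (simp only: Cons_in_permutations_of_set conj_assoc)
  also have "{1..n} - {j} - {n} = {1..n-1} - {j}" by auto
  also have "j \<in> {1..n} \<and> n \<in> {1..n} - {j} \<longleftrightarrow> j \<in> {1..n-1}" using assms by auto
  also have "j \<in> {1..n-1} \<and> ?s \<in> permutations_of_set ({1..n-1} - {j}) \<longleftrightarrow>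
      j \<in> {1..n-1} \<and> r \<in> permutations_of_set {1..n-2}"
  proof -
    have "?s \<in> permutations_of_set ({1..n-1} - {j}) \<longleftrightarrow> r \<in> permutations_of_set {1..n-2}"
      if "j \<in> {1..n-1}"
      unfolding skip_image_atLeastAtMost[OF that, symmetric]
      by (rule map_in_permutations_of_set_image[OF strict_mono_skip[THEN strict_mono_imp_inj_on]])
    then show ?thesis by blast
  qed
  finally have perm: "j # n # ?s \<in> permutations_of_set {1..n} \<longleftrightarrow> \<dots>" .
  have "free_word (j # n # ?s) \<longleftrightarrow> free_word r \<and> r!0 < r!1"
    if "j \<in> {1..n-1}" "r \<in> permutations_of_set {1..n-2}"
  proof -
    have set: "set ?s = {1..n-1} - {j}"
      using that skip_image_atLeastAtMost[of j n] by (simp add: permutations_of_set_def)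
    have len: "length r = n - 2" using length_finite_permutations_of_set[OF that(2)] by simp
    have "free_word (j # n # ?s) \<longleftrightarrow> free_word (n # ?s)"
      using that set by (intro free_word_Cons_below_top) auto
    also have "\<dots> \<longleftrightarrow> free_word ?s \<and> ?s!0 < ?s!1"
      using that set len assms strict_mono_skip[THEN strict_mono_imp_inj_on]
      by (intro free_word_Cons_top) (auto simp: permutations_of_set_def distinct_map intro: inj_on_subset)
    also have "\<dots> \<longleftrightarrow> free_word r \<and> r!0 < r!1"
      using len assms
      by (simp add: free_word_map_strict_mono[OF strict_mono_skip] strict_mono_less[OF strict_mono_skip])
    finally show ?thesis .
  qed
  with perm show ?thesis unfolding rev_Av2_def rev_Av_def by auto
qed

lemma rev_Av_eq_Un:
  assumes "3 \<le> n"
  shows "rev_Av n = rev_Av2 n \<union> Cons n ` rev_Av2 (n-1)"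
proof (intro equalityI subsetI)
  fix q assume q: "q \<in> rev_Av n"
  show "q \<in> rev_Av2 n \<union> Cons n ` rev_Av2 (n-1)"
  proof (cases "q!0 < q!1")
    case True
    with q show ?thesis by (simp add: rev_Av2_def)
  next
    case False
    have len: "length q = n" using rev_Av_length[OF q] .
    have "q!0 \<noteq> q!1" "q!0 \<le> n"
      using q len assms nth_mem[of 0 q]
      by (auto simp: rev_Av_def permutations_of_set_def nth_eq_iff_index_eq)
    with False have "q!0 = n" using rev_Av_max_position[OF q] assms by auto
    then obtain r where "q = n # r" using len assms by (cases q) auto
    with q assms show ?thesis by (auto simp: Cons_top_in_rev_Av)
  qed
qed (use assms Cons_top_in_rev_Av rev_Av2_def in auto)

lemma Cons_top_notin_rev_Av2:
  assumes "r \<in> rev_Av2 (n-1)" "2 \<le> n"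
  shows "n # r \<notin> rev_Av2 n"
proof -
  have "r \<noteq> []" using assms by (auto simp: rev_Av2_def rev_Av_def permutations_of_set_def)
  then have "r!0 \<le> n - 1"
    using assms nth_mem[of 0 r] by (auto simp: rev_Av2_def rev_Av_def permutations_of_set_def)
  then show ?thesis by (auto simp: rev_Av2_def)
qed

lemma rev_Av2_eq_image:
  assumes "4 \<le> n"
  shows "rev_Av2 n = (\<lambda>(r, j). j # n # map (skip j) r) ` (rev_Av2 (n-2) \<times> {1..n-1})"
proof (intro equalityI subsetI)
  fix q assume q: "q \<in> rev_Av2 n"
  then have qR: "q \<in> rev_Av n" and asc: "q!0 < q!1" by (simp_all add: rev_Av2_def)
  have len: "length q = n" using rev_Av_length[OF qR] .
  have perm: "set q = {1..n}" "distinct q" using qR by (simp_all add: rev_Av_def permutations_of_set_def)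
  have "q!1 \<le> n" using perm len assms nth_mem[of 1 q] by auto
  with asc have top: "q!1 = n" using rev_Av_max_position[OF qR] assms by auto
  obtain j b s where q_eq: "q = j # b # s" using len assms by (cases q; cases "tl q") auto
  have "\<forall>y\<in>set s. \<exists>x. y = skip j x"
    using perm(2) q_eq range_skip[of j] by auto
  then obtain r where "s = map (skip j) r" by (metis ex_map_conv)
  with q_eq top have q_eq': "q = j # n # map (skip j) r" by simp
  with q have "j \<in> {1..n-1}" "r \<in> rev_Av2 (n-2)"
    using Cons_Cons_skip_in_rev_Av2[OF assms] by auto
  with q_eq' show "q \<in> (\<lambda>(r, j). j # n # map (skip j) r) ` (rev_Av2 (n-2) \<times> {1..n-1})"
    by auto
qed (use Cons_Cons_skip_in_rev_Av2[OF assms] in auto)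

lemma coinv_gf_rev_Av:
  assumes "3 \<le> n"
  shows "coinv_gf (rev_Av n) = coinv_gf (rev_Av2 n) + coinv_gf (rev_Av2 (n-1))"
proof -
  have "coinv (n # r) = coinv r" if "r \<in> rev_Av2 (n-1)" for r
  proof -
    have "n # r \<in> rev_Av n" using that Cons_top_in_rev_Av[OF assms] by simp
    then have "n # r \<in> permutations_of_set {1..n}" by (simp add: rev_Av_def)
    then show ?thesis by (simp add: coinv_Cons_perm del: coinv.simps)
  qed
  then have "coinv_gf (Cons n ` rev_Av2 (n-1)) = coinv_gf (rev_Av2 (n-1))"
    by (simp add: coinv_gf_def sum.reindex)
  moreover have "rev_Av2 n \<inter> Cons n ` rev_Av2 (n-1) = {}"
    using Cons_top_notin_rev_Av2 assms by auto
  ultimately show ?thesis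
    unfolding rev_Av_eq_Un[OF assms] coinv_gf_def
    by (subst sum.union_disjoint) (auto simp: rev_Av2_def rev_Av_def)
qed

lemma coinv_gf_rev_Av2:
  assumes "4 \<le> n"
  shows "coinv_gf (rev_Av2 n) = (\<Sum>k=1..n-1. monom 1 k) * coinv_gf (rev_Av2 (n-2))"
proof -
  let ?\<phi> = "\<lambda>(r, j). j # n # map (skip j) r"
  have inj: "inj_on ?\<phi> X" for X
    using inj_map_eq_map[OF strict_mono_skip[THEN strict_mono_imp_inj_on]] by (auto simp: inj_on_def)
  have coinv_\<phi>: "coinv (j # n # map (skip j) r) = coinv r + (n - j)"
    if "r \<in> rev_Av2 (n-2)" "j \<in> {1..n-1}" for r j
  proof -
    have "j # n # map (skip j) r \<in> rev_Av2 n" using that Cons_Cons_skip_in_rev_Av2[OF assms] by simp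
    then have perm: "j # n # map (skip j) r \<in> permutations_of_set {1..n}"
      by (simp add: rev_Av2_def rev_Av_def)
    then have "n # map (skip j) r \<in> permutations_of_set ({1..n} - {j})"
      by (simp add: Cons_in_permutations_of_set)
    then have "coinv (n # map (skip j) r) = coinv r"
      by (simp add: coinv_Cons_perm coinv_map_strict_mono[OF strict_mono_skip] del: coinv.simps)
    moreover have "{y \<in> {1..n}. j < y} = {j<..n}" using that by auto
    ultimately show ?thesis using perm by (simp add: coinv_Cons_perm del: coinv.simps)
  qed
  have "coinv_gf (rev_Av2 n)
      = (\<Sum>(r, j)\<in>rev_Av2 (n-2) \<times> {1..n-1}. monom 1 (coinv r) * monom 1 (n - j))"
    unfolding rev_Av2_eq_image[OF assms] coinv_gf_def sum.reindex[OF inj]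
    by (intro sum.cong) (auto simp: coinv_\<phi> mult_monom simp del: coinv.simps)
  also have "\<dots> = coinv_gf (rev_Av2 (n-2)) * (\<Sum>j=1..n-1. monom 1 (n - j))"
    by (simp add: coinv_gf_def sum_product sum.cartesian_product)
  also have "(\<Sum>j=1..n-1. monom 1 (n - j)) = (\<Sum>k=1..n-1. (monom 1 k :: int poly))"
    using sum.atLeastAtMost_rev[of "\<lambda>k. monom 1 k :: int poly" 1 "n-1"] assms by simp
  finally show ?thesis by (simp add: mult.commute)
qed

lemma I2_eq_coinv_gf:
  assumes "2 \<le> n"
  shows "I2 n = coinv_gf (rev_Av2 n)"
proof -
  have "rev q ! (n-2) > rev q ! (n-1) \<and> (n = 2 \<or> rev q ! (n-3) < rev q ! (n-2))
      \<longleftrightarrow> q!0 < q!1" if q: "q \<in> rev_Av n" for q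
  proof -
    have len: "length q = n" using rev_Av_length[OF q] .
    have "rev q ! (n-2) = q!1" "rev q ! (n-1) = q!0" using len assms by (simp_all add: rev_nth)
    moreover have "rev q ! (n-3) = q!2" "q!2 < q!1" if "n \<noteq> 2" "q!0 < q!1"
    proof -
      have "free_word q" "distinct q" using q by (simp_all add: rev_Av_def permutations_of_set_def)
      then have "free_triple (q!0) (q!1) (q!2)" "q!1 \<noteq> q!2"
        using len assms that by (simp_all add: free_word_iff_nth nth_eq_iff_index_eq numeral_2_eq_2)
      with that show "q!2 < q!1" using free_triple_asc by blast
      show "rev q ! (n-3) = q!2" using len assms that by (simp add: rev_nth numeral_3_eq_3)
    qed
    ultimately show ?thesis by (cases "n = 2") auto
  qed
  then have "{q \<in> rev_Av n. rev q ! (n-2) > rev q ! (n-1)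
      \<and> (n = 2 \<or> rev q ! (n-3) < rev q ! (n-2))} = rev_Av2 n"
    by (auto simp: rev_Av2_def)
  then show ?thesis
    unfolding I2_def Av_Pi0_eq_rev_image
    by (simp add: coinv_gf_def sum.reindex inv_count_eq_coinv_rev)
qed

lemma permutations_of_set_atLeastAtMost_2: "permutations_of_set {1..2::nat} = {[1,2], [2,1]}"
proof -
  have "{1..2::nat} = {1,2}" by auto
  then show ?thesis by (simp add: permutations_of_set_doubleton)
qed

lemma permutations_of_set_atLeastAtMost_3:
  "permutations_of_set {1..3::nat} = {[1,2,3], [1,3,2], [2,1,3], [2,3,1], [3,1,2], [3,2,1]}"
proof -
  have "{1..3::nat} = {1,2,3}" by auto
  moreover have "{1,2,3::nat} - {1} = {2,3}" "{1,2,3::nat} - {2} = {1,3}" "{1,2,3::nat} - {3} = {1,2}"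
    by auto
  ultimately show ?thesis
    by (subst permutations_of_set_nonempty)
      (simp_all only: UN_insert UN_empty permutations_of_set_doubleton, auto)
qed

lemma rev_Av2_2: "rev_Av2 2 = {[1,2]}"
  unfolding rev_Av2_def rev_Av_def permutations_of_set_atLeastAtMost_2 by auto

lemma rev_Av2_3: "rev_Av2 3 = {[1,3,2], [2,3,1]}"
  unfolding rev_Av2_def rev_Av_def permutations_of_set_atLeastAtMost_3 by (auto simp: free_triple_def)

theorem mainTheorem12:
  shows "I2 2 = monom 1 1
    \<and> I2 3 = monom 1 1 + monom 1 2
    \<and> (\<forall>n\<ge>4. I2 n = (\<Sum>k=1..n-1. monom 1 k) * I2 (n-2))
    \<and> (\<forall>n\<ge>3. I_poly n Pi0 = I2 (n-1) + I2 n)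
    \<and> (\<forall>n\<ge>4. I_poly n Pi0 = I2 (n-1) + (\<Sum>k=1..n-1. monom 1 k) * I2 (n-2))"
proof -
  have I2_2: "I2 2 = monom 1 1"
    by (simp add: I2_eq_coinv_gf rev_Av2_2 coinv_gf_def)
  have I2_3: "I2 3 = monom 1 1 + monom 1 2"
    by (simp add: I2_eq_coinv_gf rev_Av2_3 coinv_gf_def numeral_2_eq_2)
  have I2_rec: "I2 n = (\<Sum>k=1..n-1. monom 1 k) * I2 (n-2)" if "n \<ge> 4" for n
    using that by (simp add: I2_eq_coinv_gf coinv_gf_rev_Av2)
  have I_poly_rec: "I_poly n Pi0 = I2 (n-1) + I2 n" if "n \<ge> 3" for n
    using that by (simp add: I_poly_Pi0_eq coinv_gf_rev_Av I2_eq_coinv_gf add.commute)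
  show ?thesis using I2_2 I2_3 I2_rec I_poly_rec by simp
qed

end
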